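(* Let $A,E\in M_n(\mathbb{FT})$ with $E$ idempotent, and let $\{c_1,\dots,c_k\}$ be a set of representatives of the critical classes of $E$. (i) If $A\le_{\mathcal R}E$, then the rows of $A$ indexed by $c_1,\dots,c_k$ form a generating set for $R(A)$; if moreover $A\,\mathcal{R}\,E$, this generating set is minimal. (ii) If $A\le_{\mathcal L}E$, then the columns of $A$ indexed by $c_1,\dots,c_k$ form a generating set for $C(A)$; if moreover $A\,\mathcal{L}\,E$, this generating set is minimal.
   Context: $\mathbb{FT}$ is $\mathbb{R}$ with $a\oplus b=\max(a,b)$, $a\otimes b=a+b$; $M_n(\mathbb{FT})$ is the semigroup of real $n\times n$ matrices under $(A\otimes B)_{i,j}=\max_k(A_{i,k}+B_{k,j})$. $C(A)$, $R(A)\subseteq\mathbb{R}^n$ are the sets of finite componentwise maxima of real shifts of columns, resp. rows, of $A$; generating sets are with respect to componentwise max and adding real constants. For a semigroup $S$ ($S^1$ = $S$ with identity adjoined if needed): $a\le_{\mathcal R}b$ iff $aS^1\subseteq bS^1$, $a\le_{\mathcal L}b$ iff $S^1a\subseteq S^1b$, $a\,\mathcal R\,b$ iff $aS^1=bS^1$, $a\,\mathcal L\,b$ iff $S^1a=S^1b$. $\Gamma_E$ is the complete weighted digraph on $\{1,\dots,n\}$ with edge $j\to i$ of weight $E_{i,j}$; the maximum cycle mean is the maximum arithmetic mean of edge weights over closed paths; the critical graph consists of all nodes and edges on closed paths attaining the maximum cycle mean; the critical classes are its strongly connected components. *)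

theory Defs
  imports Main "HOL-Library.Library"
begin

text \<open>Max-plus (finite tropical) n x n matrices, indexed by a finite type 'n.\<close>

type_synonym 'n tmat = "'n \<Rightarrow> 'n \<Rightarrow> real"

definition tmul :: "('n::finite) tmat \<Rightarrow> 'n tmat \<Rightarrow> 'n tmat" (infixl "\<otimes>\<^sub>t" 70) where
  "tmul A B = (\<lambda>i j. Max (range (\<lambda>k. A i k + B k j)))"

definition idempotent_t :: "('n::finite) tmat \<Rightarrow> bool" where
  "idempotent_t E \<longleftrightarrow> E \<otimes>\<^sub>t E = E"

text \<open>Principal one-sided ideals in S^1 (S = M_n(FT) has no identity, so one is adjoined).\<close>
definition right_ideal1 :: "('n::finite) tmat \<Rightarrow> 'n tmat set" where
  "right_ideal1 A = insert A {A \<otimes>\<^sub>t X | X. True}"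

definition left_ideal1 :: "('n::finite) tmat \<Rightarrow> 'n tmat set" where
  "left_ideal1 A = insert A {X \<otimes>\<^sub>t A | X. True}"

definition le_R :: "('n::finite) tmat \<Rightarrow> 'n tmat \<Rightarrow> bool" where
  "le_R A B \<longleftrightarrow> right_ideal1 A \<subseteq> right_ideal1 B"

definition le_L :: "('n::finite) tmat \<Rightarrow> 'n tmat \<Rightarrow> bool" where
  "le_L A B \<longleftrightarrow> left_ideal1 A \<subseteq> left_ideal1 B"

definition Rrel :: "('n::finite) tmat \<Rightarrow> 'n tmat \<Rightarrow> bool" where
  "Rrel A B \<longleftrightarrow> right_ideal1 A = right_ideal1 B"

definition Lrel :: "('n::finite) tmat \<Rightarrow> 'n tmat \<Rightarrow> bool" where
  "Lrel A B \<longleftrightarrow> left_ideal1 A = left_ideal1 B"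

definition tspan :: "('n \<Rightarrow> real) set \<Rightarrow> ('n \<Rightarrow> real) set" where
  "tspan G = {x. \<exists>F. finite F \<and> F \<noteq> {} \<and> F \<subseteq> G \<times> UNIV \<and>
                   x = (\<lambda>k. Max ((\<lambda>(v, c). v k + c) ` F))}"

definition row :: "'n tmat \<Rightarrow> 'n \<Rightarrow> ('n \<Rightarrow> real)" where
  "row A i = (\<lambda>j. A i j)"

definition col :: "'n tmat \<Rightarrow> 'n \<Rightarrow> ('n \<Rightarrow> real)" where
  "col A j = (\<lambda>i. A i j)"

definition row_space :: "'n tmat \<Rightarrow> ('n \<Rightarrow> real) set" where
  "row_space A = tspan (range (row A))"

definition col_space :: "'n tmat \<Rightarrow> ('n \<Rightarrow> real) set" where
  "col_space A = tspan (range (col A))"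

definition generates :: "('n \<Rightarrow> real) set \<Rightarrow> ('n \<Rightarrow> real) set \<Rightarrow> bool" where
  "generates G V \<longleftrightarrow> tspan G = V"

definition min_generates :: "('n \<Rightarrow> real) set \<Rightarrow> ('n \<Rightarrow> real) set \<Rightarrow> bool" where
  "min_generates G V \<longleftrightarrow> generates G V \<and> (\<forall>G'. G' \<subset> G \<longrightarrow> \<not> generates G' V)"

text \<open>Closed paths in Gamma_E: a nonempty list ps = [v0,...,v(m-1)] denotes the closed path
  v0 -> v1 -> ... -> v(m-1) -> v0; the edge j -> i has weight E i j.\<close>

definition cpath_weight :: "'n tmat \<Rightarrow> 'n list \<Rightarrow> real" where
  "cpath_weight E ps = (\<Sum>t<length ps. E (ps ! ((t + 1) mod length ps)) (ps ! t))"

definition cpath_mean :: "'n tmat \<Rightarrow> 'n list \<Rightarrow> real" where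
  "cpath_mean E ps = cpath_weight E ps / real (length ps)"

definition max_cycle_mean :: "'n tmat \<Rightarrow> real" where
  "max_cycle_mean E = (SUP ps \<in> {ps. ps \<noteq> []}. cpath_mean E ps)"

definition critical_cpath :: "'n tmat \<Rightarrow> 'n list \<Rightarrow> bool" where
  "critical_cpath E ps \<longleftrightarrow> ps \<noteq> [] \<and> cpath_mean E ps = max_cycle_mean E"

definition critical_node :: "'n tmat \<Rightarrow> 'n \<Rightarrow> bool" where
  "critical_node E v \<longleftrightarrow> (\<exists>ps. critical_cpath E ps \<and> v \<in> set ps)"

text \<open>(j, i) is a critical edge j -> i.\<close>
definition critical_edges :: "'n tmat \<Rightarrow> ('n \<times> 'n) set" where
  "critical_edges E = {(j, i). \<exists>ps. critical_cpath E ps \<and>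
      (\<exists>t < length ps. ps ! t = j \<and> ps ! ((t + 1) mod length ps) = i)}"

definition critical_class :: "'n tmat \<Rightarrow> 'n \<Rightarrow> 'n set" where
  "critical_class E v = {w. critical_node E w \<and> (v, w) \<in> (critical_edges E)\<^sup>*
                              \<and> (w, v) \<in> (critical_edges E)\<^sup>*}"

definition critical_classes :: "'n tmat \<Rightarrow> 'n set set" where
  "critical_classes E = {critical_class E v | v. critical_node E v}"

definition crit_reps :: "'n tmat \<Rightarrow> 'n set \<Rightarrow> bool" where
  "crit_reps E C \<longleftrightarrow> C \<subseteq> \<Union>(critical_classes E) \<and>
      (\<forall>K \<in> critical_classes E. \<exists>!c. c \<in> C \<and> c \<in> K)"

end

theory Submission
  imports Defs
begin

text \<open>
  Idempotency of E gives E i k + E k j \<le> E i j, so every cycle of \<Gamma>_E has weight at most 0.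
  Iterating optimal factorisations E i x = E i l + E l x from x = j must revisit a node,
  and the stretch between two visits is a cycle of weight 0 through which E i j factors. Hence the
  maximum cycle mean is 0, the critical cycles are exactly the zero-weight cycles, and every entry
  factors through a representative: E i j = max_c (E i c + E c j). If E \<otimes> A = A, which
  A \<le>_R E implies, every row of A is thus a maximum of shifts of the representative rows.
  If a representative row c were generated by the others, some other representative row c' would
  dominate it up to a shift with equality at a suitable column; when E \<in> A S^1 this domination passes
  to the rows of E and gives E c c' + E c' c \<ge> 0, so c and c' would lie on a common critical
  cycle. Columns are handled by transposition.
\<close>

section \<open>Tropical matrix product and transposition\<close>

lemma tmul_ge: "A i k + B k j \<le> (A \<otimes>\<^sub>t B) i j"
  unfolding tmul_def by (rule Max_ge) auto

lemma tmul_attained: "\<exists>k. (A \<otimes>\<^sub>t B) i j = A i k + B k j"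
proof -
  have "Max (range (\<lambda>k. A i k + B k j)) \<in> range (\<lambda>k. A i k + B k j)"
    by (rule Max_in) auto
  then obtain k where "Max (range (\<lambda>k. A i k + B k j)) = A i k + B k j" by blast
  then show ?thesis unfolding tmul_def by blast
qed

lemma tmul_assoc: "(A \<otimes>\<^sub>t B) \<otimes>\<^sub>t C = A \<otimes>\<^sub>t (B \<otimes>\<^sub>t (C::('n::finite) tmat))"
proof (intro ext antisym)
  fix i j
  obtain k where k: "((A \<otimes>\<^sub>t B) \<otimes>\<^sub>t C) i j = (A \<otimes>\<^sub>t B) i k + C k j"
    using tmul_attained by blast
  obtain l where l: "(A \<otimes>\<^sub>t B) i k = A i l + B l k"
    using tmul_attained by blast
  have "B l k + C k j \<le> (B \<otimes>\<^sub>t C) l j" "A i l + (B \<otimes>\<^sub>t C) l j \<le> (A \<otimes>\<^sub>t (B \<otimes>\<^sub>t C)) i j"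
    by (rule tmul_ge)+
  then show "((A \<otimes>\<^sub>t B) \<otimes>\<^sub>t C) i j \<le> (A \<otimes>\<^sub>t (B \<otimes>\<^sub>t C)) i j"
    using k l by linarith
next
  fix i j
  obtain k where k: "(A \<otimes>\<^sub>t (B \<otimes>\<^sub>t C)) i j = A i k + (B \<otimes>\<^sub>t C) k j"
    using tmul_attained by blast
  obtain l where l: "(B \<otimes>\<^sub>t C) k j = B k l + C l j"
    using tmul_attained by blast
  have "A i k + B k l \<le> (A \<otimes>\<^sub>t B) i l" "(A \<otimes>\<^sub>t B) i l + C l j \<le> ((A \<otimes>\<^sub>t B) \<otimes>\<^sub>t C) i j"
    by (rule tmul_ge)+
  then show "(A \<otimes>\<^sub>t (B \<otimes>\<^sub>t C)) i j \<le> ((A \<otimes>\<^sub>t B) \<otimes>\<^sub>t C) i j"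
    using k l by linarith
qed

definition ttranspose :: "'n tmat \<Rightarrow> 'n tmat" where
  "ttranspose A = (\<lambda>i j. A j i)"

lemma ttranspose_tmul: "ttranspose (A \<otimes>\<^sub>t B) = ttranspose B \<otimes>\<^sub>t ttranspose (A::('n::finite) tmat)"
  unfolding ttranspose_def tmul_def by (simp add: add.commute)

lemma ttranspose_ttranspose [simp]: "ttranspose (ttranspose A) = A"
  unfolding ttranspose_def by simp

lemma col_space_eq_row_space_ttranspose: "col_space A = row_space (ttranspose A)"
  unfolding col_space_def row_space_def col_def row_def ttranspose_def by simp

lemma col_eq_row_ttranspose: "col A = row (ttranspose A)"
  unfolding col_def row_def ttranspose_def by simp

lemma left_ideal1_iff_ttranspose:
  "X \<in> left_ideal1 Y \<longleftrightarrow> ttranspose X \<in> right_ideal1 (ttranspose (Y::('n::finite) tmat))"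
proof -
  have "X = Z \<otimes>\<^sub>t Y \<longleftrightarrow> ttranspose X = ttranspose Y \<otimes>\<^sub>t ttranspose Z" for Z
    by (metis ttranspose_tmul ttranspose_ttranspose)
  moreover have "X = Y \<longleftrightarrow> ttranspose X = ttranspose Y"
    by (metis ttranspose_ttranspose)
  ultimately show ?thesis
    unfolding left_ideal1_def right_ideal1_def by (auto, metis ttranspose_ttranspose)
qed

lemma idempotent_fixes_right_ideal1:
  assumes "idempotent_t E" and "A \<in> right_ideal1 E"
  shows "E \<otimes>\<^sub>t A = A"
proof -
  have EE: "E \<otimes>\<^sub>t E = E" using assms(1) unfolding idempotent_t_def .
  from assms(2) consider "A = E" | X where "A = E \<otimes>\<^sub>t X"
    unfolding right_ideal1_def by blast
  then show ?thesis
    by cases (simp_all add: EE flip: tmul_assoc)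
qed

section \<open>Tropical spans\<close>

lemma tspan_generator: "v \<in> G \<Longrightarrow> (\<lambda>k. v k + c) \<in> tspan G"
  unfolding tspan_def by (intro CollectI exI[of _ "{(v, c)}"]) auto

lemma tspan_max:
  assumes "x \<in> tspan G" and "y \<in> tspan G"
  shows "(\<lambda>k. max (x k) (y k)) \<in> tspan G"
proof -
  obtain F1 where F1: "finite F1" "F1 \<noteq> {}" "F1 \<subseteq> G \<times> UNIV"
    and x: "x = (\<lambda>k. Max ((\<lambda>(v, c). v k + c) ` F1))"
    using assms(1) unfolding tspan_def by blast
  obtain F2 where F2: "finite F2" "F2 \<noteq> {}" "F2 \<subseteq> G \<times> UNIV"
    and y: "y = (\<lambda>k. Max ((\<lambda>(v, c). v k + c) ` F2))"
    using assms(2) unfolding tspan_def by blast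
  have "(\<lambda>k. max (x k) (y k)) = (\<lambda>k. Max ((\<lambda>(v, c). v k + c) ` (F1 \<union> F2)))"
    using F1 F2 x y by (simp add: image_Un Max_Un)
  then show ?thesis
    unfolding tspan_def using F1 F2 by (intro CollectI exI[of _ "F1 \<union> F2"]) auto
qed

lemma tspan_induct [consumes 1, case_names generator max]:
  assumes "x \<in> tspan G"
    and generator: "\<And>v c. v \<in> G \<Longrightarrow> P (\<lambda>k. v k + c)"
    and max: "\<And>x y. P x \<Longrightarrow> P y \<Longrightarrow> P (\<lambda>k. max (x k) (y k))"
  shows "P x"
proof -
  obtain F where F: "finite F" "F \<noteq> {}" "F \<subseteq> G \<times> UNIV"
    and x: "x = (\<lambda>k. Max ((\<lambda>(v, c). v k + c) ` F))"
    using assms(1) unfolding tspan_def by blast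
  have "P (\<lambda>k. Max ((\<lambda>(v, c). v k + c) ` F))"
    using F
  proof (induction F rule: finite_ne_induct)
    case (singleton p)
    then show ?case using generator by (cases p) auto
  next
    case (insert p F)
    obtain v c where p: "p = (v, c)" by fastforce
    have "(\<lambda>k. Max ((\<lambda>(v, c). v k + c) ` insert p F))
        = (\<lambda>k. max (v k + c) (Max ((\<lambda>(v, c). v k + c) ` F)))"
      using insert.hyps p by auto
    then show ?case using insert p by (auto intro: max generator)
  qed
  then show ?thesis using x by simp
qed

lemma tspan_shift: "x \<in> tspan G \<Longrightarrow> (\<lambda>k. x k + d) \<in> tspan G"
proof (induction rule: tspan_induct)
  case (generator v c)
  then show ?case using tspan_generator[of v G "c + d"] by (simp add: add.assoc)
next
  case (max x y)
  then show ?case using tspan_max[of "\<lambda>k. x k + d" G "\<lambda>k. y k + d"]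
    by (simp add: max_add_distrib_left)
qed

lemma generator_in_tspan: "v \<in> G \<Longrightarrow> v \<in> tspan G"
  using tspan_generator[of v G 0] by simp

lemma tspan_subset:
  assumes "G \<subseteq> tspan H"
  shows "tspan G \<subseteq> tspan H"
proof
  fix x assume "x \<in> tspan G"
  then show "x \<in> tspan H"
  proof (induction rule: tspan_induct)
    case (generator v c)
    then show ?case using assms tspan_shift by blast
  next
    case (max x y)
    then show ?case by (rule tspan_max)
  qed
qed

lemma tspan_coordinate_attained:
  "x \<in> tspan G \<Longrightarrow> \<exists>v\<in>G. \<exists>d. (\<forall>k. v k + d \<le> x k) \<and> v j + d = x j"
proof (induction rule: tspan_induct)
  case (generator v c)
  then show ?case by auto
next
  case (max x y)
  show ?case
  proof (cases "y j \<le> x j")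
    case True
    with max.IH(1) obtain v d where "v \<in> G" "\<forall>k. v k + d \<le> x k" "v j + d = x j" by blast
    with True show ?thesis by (intro bexI[of _ v] exI[of _ d]) (auto intro: max.coboundedI1)
  next
    case False
    with max.IH(2) obtain v d where "v \<in> G" "\<forall>k. v k + d \<le> y k" "v j + d = y j" by blast
    with False show ?thesis by (intro bexI[of _ v] exI[of _ d]) (auto intro: max.coboundedI2)
  qed
qed

lemma Max_shifts_in_tspan:
  assumes "finite S" and "S \<noteq> {}" and "\<forall>c\<in>S. v c \<in> G"
  shows "(\<lambda>j. Max ((\<lambda>c. v c j + w c) ` S)) \<in> tspan G"
  using assms
proof (induction S rule: finite_ne_induct)
  case (singleton c)
  then show ?case using tspan_generator[of "v c" G "w c"] by simp
next
  case (insert c S)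
  have "(\<lambda>j. Max ((\<lambda>c. v c j + w c) ` insert c S))
      = (\<lambda>j. max (v c j + w c) (Max ((\<lambda>c. v c j + w c) ` S)))"
    using insert.hyps by simp
  then show ?case using insert tspan_generator[of "v c" G "w c"] by (simp add: tspan_max)
qed

section \<open>Walks and cycles of an idempotent matrix\<close>

lemma idempotent_t_triangle: "idempotent_t E \<Longrightarrow> E i k + E k j \<le> E i j"
  unfolding idempotent_t_def using tmul_ge[of E i k E j] by simp

lemma idempotent_t_diag_nonpos: "idempotent_t E \<Longrightarrow> E i i \<le> (0::real)"
  using idempotent_t_triangle[of E i i i] by simp

lemma idempotent_t_walk_le:
  assumes "idempotent_t E" and "1 \<le> m"
  shows "(\<Sum>t<m. E (f (Suc t)) (f t)) \<le> E (f m) (f 0)"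
  using assms(2)
proof (induction m rule: dec_induct)
  case base
  then show ?case by simp
next
  case (step m)
  have "(\<Sum>t<Suc m. E (f (Suc t)) (f t)) = (\<Sum>t<m. E (f (Suc t)) (f t)) + E (f (Suc m)) (f m)"
    by simp
  also have "\<dots> \<le> E (f m) (f 0) + E (f (Suc m)) (f m)"
    using step.IH by simp
  also have "\<dots> \<le> E (f (Suc m)) (f 0)"
    using idempotent_t_triangle[OF assms(1), of "f (Suc m)" "f m" "f 0"] by simp
  finally show ?case .
qed

definition cycle_node :: "'n list \<Rightarrow> nat \<Rightarrow> 'n" where
  "cycle_node ps u = ps ! (u mod length ps)"

lemma cycle_node_periodic: "cycle_node ps (u + length ps) = cycle_node ps u"
  unfolding cycle_node_def by simp

lemma cpath_weight_cycle_node: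
  assumes "ps \<noteq> []"
  shows "cpath_weight E ps = (\<Sum>u<length ps. E (cycle_node ps (Suc u)) (cycle_node ps u))"
  unfolding cpath_weight_def cycle_node_def by (intro sum.cong) auto

lemma sum_periodic_shift:
  fixes h :: "nat \<Rightarrow> 'a::cancel_comm_monoid_add"
  assumes periodic: "\<And>u. h (u + m) = h u"
  shows "(\<Sum>u<m. h (u + s)) = (\<Sum>u<m. h u)"
proof (induction s)
  case 0
  then show ?case by simp
next
  case (Suc s)
  have "h s + (\<Sum>u<m. h (u + Suc s)) = (\<Sum>u<Suc m. h (u + s))"
    by (subst sum.lessThan_Suc_shift) simp
  also have "\<dots> = h s + (\<Sum>u<m. h (u + s))"
    using periodic[of s] by (simp add: add.commute)
  finally show ?case using Suc by simp
qed

lemma cpath_weight_rotate: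
  assumes "ps \<noteq> []"
  shows "cpath_weight E ps = (\<Sum>u<length ps. E (cycle_node ps (Suc u + t)) (cycle_node ps (u + t)))"
proof -
  have "(\<Sum>u<length ps. E (cycle_node ps (Suc (u + t))) (cycle_node ps (u + t)))
      = (\<Sum>u<length ps. E (cycle_node ps (Suc u)) (cycle_node ps u))"
    using cycle_node_periodic[of ps]
    by (intro sum_periodic_shift[where h = "\<lambda>u. E (cycle_node ps (Suc u)) (cycle_node ps u)"])
      (metis add_Suc)
  then show ?thesis using cpath_weight_cycle_node[OF assms] by simp
qed

lemma cpath_weight_nonpos:
  assumes "idempotent_t E" and "ps \<noteq> []"
  shows "cpath_weight E ps \<le> 0"
proof -
  have "cpath_weight E ps = (\<Sum>u<length ps. E (cycle_node ps (Suc u)) (cycle_node ps u))"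
    by (rule cpath_weight_cycle_node[OF assms(2)])
  also have "\<dots> \<le> E (cycle_node ps (length ps)) (cycle_node ps 0)"
    using assms by (intro idempotent_t_walk_le) (auto simp: Suc_le_eq)
  also have "\<dots> \<le> 0"
    using idempotent_t_diag_nonpos[OF assms(1)] by (simp add: cycle_node_def)
  finally show ?thesis .
qed

text \<open>The rest of the cycle after the edge j \<rightarrow> i is a walk from i back to j.\<close>
lemma cpath_weight_le_edge_return:
  assumes "idempotent_t E" and "2 \<le> length ps" and "t < length ps"
    and "ps ! t = j" and "ps ! ((t + 1) mod length ps) = i"
  shows "cpath_weight E ps \<le> E i j + E j i"
proof -
  obtain n where n: "length ps = Suc n" "1 \<le> n"
    using assms(2) by (cases "length ps") auto
  define f where "f u = cycle_node ps (Suc u + t)" for u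
  have ends: "f 0 = i" "f n = j" "cycle_node ps t = j"
    using assms(3-5) n cycle_node_periodic[of ps t] unfolding f_def
    by (auto simp: cycle_node_def add.commute)
  have "cpath_weight E ps = (\<Sum>u<Suc n. E (cycle_node ps (Suc u + t)) (cycle_node ps (u + t)))"
    using cpath_weight_rotate[of ps E t] n(1) by (metis Zero_not_Suc list.size(3))
  also have "\<dots> = E (f 0) (cycle_node ps t) + (\<Sum>u<n. E (f (Suc u)) (f u))"
    unfolding f_def by (subst sum.lessThan_Suc_shift) simp
  also have "(\<Sum>u<n. E (f (Suc u)) (f u)) \<le> E (f n) (f 0)"
    by (rule idempotent_t_walk_le[OF assms(1) n(2)])
  finally show ?thesis using ends by simp
qed

lemma zero_cycle_edge_return:
  assumes "idempotent_t E" and "cpath_weight E ps = 0" and "t < length ps"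
    and "ps ! t = j" and "ps ! ((t + 1) mod length ps) = i"
  shows "0 \<le> E i j + E j i"
proof (cases "length ps = 1")
  case True
  then have "i = j" "E j j = 0"
    using assms(2-5) by (auto simp: cpath_weight_def)
  then show ?thesis by simp
next
  case False
  then show ?thesis
    using assms cpath_weight_le_edge_return[of E ps t j i] by simp
qed

section \<open>Critical cycles and classes of an idempotent matrix\<close>

lemma finite_range_repeats:
  fixes f :: "nat \<Rightarrow> 'n::finite"
  obtains a b where "1 \<le> a" and "a < b" and "f a = f b"
proof -
  have "\<not> inj_on f {1..}"
    using finite_imageD[of f "{1::nat..}"] by (auto simp: infinite_Ici)
  then obtain a b where "1 \<le> a" "1 \<le> b" "a \<noteq> b" "f a = f b"
    unfolding inj_on_def by auto
  then show ?thesis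
    using that by (cases "a < b") (auto simp: not_less_iff_gr_or_eq)
qed

lemma sum_geodesic_chain:
  fixes E :: "'n tmat"
  assumes "\<And>t. E i (k t) = E i (k (Suc t)) + E (k (Suc t)) (k t)"
  shows "(\<Sum>s<m. E (k (a + s + 1)) (k (a + s))) = E i (k a) - E i (k (a + m))"
proof (induction m)
  case 0
  then show ?case by simp
next
  case (Suc m)
  then show ?case using assms[of "a + m"] by simp
qed

lemma cpath_weight_closed_walk:
  assumes "1 \<le> m" and "k (a + m) = k a"
  shows "cpath_weight E (map (\<lambda>s. k (a + s)) [0..<m]) = (\<Sum>s<m. E (k (a + s + 1)) (k (a + s)))"
proof -
  have wrap: "k (a + Suc t mod m) = k (a + t + 1)" if "t < m" for t
  proof (cases "Suc t < m")
    case False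
    then have "Suc t = m" using that by simp
    then have "a + t + 1 = a + m" "a + Suc t mod m = a" by simp_all
    then show ?thesis using assms(2) by metis
  qed simp
  show ?thesis
    unfolding cpath_weight_def using assms(1) wrap by (intro sum.cong) auto
qed

text \<open>Iterate optimal factorisations E i x = E i l + E l x starting from x = j. By telescoping and
  the walk bound, E i j factors through every node of this chain, and the stretch between two visits
  of a node is a zero-weight cycle.\<close>
lemma idempotent_t_factor_through_zero_cycle:
  fixes E :: "('n::finite) tmat"
  assumes idem: "idempotent_t E"
  obtains ps l where "ps \<noteq> []" and "cpath_weight E ps = 0" and "l \<in> set ps"
    and "E i j = E i l + E l j"
proof -
  have "\<exists>l. E i x = E i l + E l x" for x
    using tmul_attained[of E E i x] idem unfolding idempotent_t_def by simp
  then obtain next_node where next_node: "\<And>x. E i x = E i (next_node x) + E (next_node x) x"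
    by metis
  define k where "k t = (next_node ^^ t) j" for t
  have chain: "E i (k t) = E i (k (Suc t)) + E (k (Suc t)) (k t)" for t
    using next_node[of "k t"] unfolding k_def by simp
  obtain a b where ab: "1 \<le> a" "a < b" "k a = k b"
    by (rule finite_range_repeats[of k])
  define ps where "ps = map (\<lambda>s. k (a + s)) [0..<b - a]"
  have "cpath_weight E ps = (\<Sum>s<b - a. E (k (a + s + 1)) (k (a + s)))"
    unfolding ps_def using ab by (intro cpath_weight_closed_walk) auto
  also have "\<dots> = 0"
    using sum_geodesic_chain[of E i k, OF chain] ab by simp
  finally have zero: "cpath_weight E ps = 0" .
  have ne: "ps \<noteq> []"
    unfolding ps_def using ab(2) by simp
  have in_ps: "k a \<in> set ps"
    unfolding ps_def set_map using ab(2) by (intro image_eqI[of _ _ 0]) auto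
  have "E i j - E i (k a) = (\<Sum>s<a. E (k (Suc s)) (k s))"
    using sum_geodesic_chain[of E i k, OF chain, of 0 a] by (simp add: k_def)
  also have "\<dots> \<le> E (k a) (k 0)"
    by (rule idempotent_t_walk_le[OF idem ab(1)])
  finally have "E i j \<le> E i (k a) + E (k a) j"
    by (simp add: k_def)
  then have "E i j = E i (k a) + E (k a) j"
    using idempotent_t_triangle[OF idem, of i "k a" j] by simp
  then show ?thesis using that ne zero in_ps by blast
qed

lemma max_cycle_mean_idempotent:
  fixes E :: "('n::finite) tmat"
  assumes idem: "idempotent_t E"
  shows "max_cycle_mean E = 0"
  unfolding max_cycle_mean_def
proof (rule cSup_eq_maximum)
  obtain ps :: "'n list" and l where "ps \<noteq> []" "cpath_weight E ps = 0"
    using idempotent_t_factor_through_zero_cycle[OF idem] by metis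
  then show "0 \<in> cpath_mean E ` {ps. ps \<noteq> []}"
    by (intro image_eqI[of _ _ ps]) (auto simp: cpath_mean_def)
next
  fix x assume "x \<in> cpath_mean E ` {ps. ps \<noteq> []}"
  then show "x \<le> 0"
    using cpath_weight_nonpos[OF idem] by (auto simp: cpath_mean_def divide_nonpos_nonneg)
qed

lemma critical_cpath_iff_zero_weight:
  fixes E :: "('n::finite) tmat"
  assumes "idempotent_t E"
  shows "critical_cpath E ps \<longleftrightarrow> ps \<noteq> [] \<and> cpath_weight E ps = 0"
  unfolding critical_cpath_def max_cycle_mean_idempotent[OF assms] cpath_mean_def by auto

lemma critical_edge_return:
  fixes E :: "('n::finite) tmat"
  assumes idem: "idempotent_t E" and "(j, i) \<in> critical_edges E"
  shows "0 \<le> E i j + E j i"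
proof -
  obtain ps t where "critical_cpath E ps" "t < length ps"
    "ps ! t = j" "ps ! ((t + 1) mod length ps) = i"
    using assms(2) unfolding critical_edges_def by blast
  then show ?thesis
    using zero_cycle_edge_return[OF idem] critical_cpath_iff_zero_weight[OF idem] by blast
qed

lemma critical_node_diag:
  fixes E :: "('n::finite) tmat"
  assumes idem: "idempotent_t E" and "critical_node E v"
  shows "E v v = 0"
proof -
  obtain ps t where ps: "critical_cpath E ps" "t < length ps" "ps ! t = v"
    using assms(2) unfolding critical_node_def by (auto simp: in_set_conv_nth)
  define w where "w = ps ! ((t + 1) mod length ps)"
  have "(v, w) \<in> critical_edges E"
    unfolding critical_edges_def w_def using ps by blast
  then have "0 \<le> E w v + E v w"
    by (rule critical_edge_return[OF idem])
  then show ?thesis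
    using idempotent_t_triangle[OF idem, of v w v] idempotent_t_diag_nonpos[OF idem, of v] by simp
qed

lemma critical_rtrancl_return:
  fixes E :: "('n::finite) tmat"
  assumes idem: "idempotent_t E" and "(x, y) \<in> (critical_edges E)\<^sup>*"
  shows "x = y \<or> 0 \<le> E x y + E y x"
  using assms(2)
proof (induction rule: rtrancl_induct)
  case base
  then show ?case by simp
next
  case (step y z)
  have "0 \<le> E z y + E y z"
    by (rule critical_edge_return[OF idem step(2)])
  moreover have "E x y + E y z \<le> E x z" "E z y + E y x \<le> E z x"
    using idempotent_t_triangle[OF idem] by auto
  ultimately show ?case using step.IH by auto
qed

lemma crit_reps_factor:
  fixes E :: "('n::finite) tmat"
  assumes idem: "idempotent_t E" and reps: "crit_reps E C"
  shows "\<exists>c\<in>C. E i j \<le> E i c + E c j"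
proof -
  obtain ps l where ps: "ps \<noteq> []" "cpath_weight E ps = 0" "l \<in> set ps" "E i j = E i l + E l j"
    using idempotent_t_factor_through_zero_cycle[OF idem] by metis
  have "critical_node E l"
    unfolding critical_node_def using ps critical_cpath_iff_zero_weight[OF idem] by blast
  then have "critical_class E l \<in> critical_classes E"
    unfolding critical_classes_def by blast
  then obtain c where c: "c \<in> C" "c \<in> critical_class E l"
    using reps unfolding crit_reps_def by blast
  then have "(l, c) \<in> (critical_edges E)\<^sup>*"
    unfolding critical_class_def by blast
  then have "l = c \<or> 0 \<le> E l c + E c l"
    by (rule critical_rtrancl_return[OF idem])
  moreover have "E i l + E l c \<le> E i c" "E c l + E l j \<le> E c j"
    using idempotent_t_triangle[OF idem] by auto
  ultimately have "E i j \<le> E i c + E c j"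
    using ps(4) by auto
  then show ?thesis using c(1) by blast
qed

lemma crit_reps_diag:
  fixes E :: "('n::finite) tmat"
  assumes "idempotent_t E" and "crit_reps E C" and "c \<in> C"
  shows "E c c = 0"
proof -
  have "critical_node E c"
    using assms(2,3) unfolding crit_reps_def critical_classes_def critical_class_def by blast
  then show ?thesis by (rule critical_node_diag[OF assms(1)])
qed

text \<open>Otherwise [c, c'] would be a zero-weight cycle, putting c and c' into the same critical class.\<close>
lemma crit_reps_separated:
  fixes E :: "('n::finite) tmat"
  assumes idem: "idempotent_t E" and reps: "crit_reps E C"
    and "c \<in> C" and "c' \<in> C" and "c \<noteq> c'"
  shows "E c c' + E c' c < 0"
proof (rule ccontr)
  assume "\<not> E c c' + E c' c < 0"
  moreover have "cpath_weight E [c, c'] = E c' c + E c c'"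
    unfolding cpath_weight_def by (simp add: numeral_2_eq_2)
  moreover have "cpath_weight E [c, c'] \<le> 0"
    using cpath_weight_nonpos[OF idem] by simp
  ultimately have "critical_cpath E [c, c']"
    using critical_cpath_iff_zero_weight[OF idem] by simp
  then have "(c, c') \<in> critical_edges E" "(c', c) \<in> critical_edges E"
    "critical_node E c" "critical_node E c'"
    unfolding critical_edges_def critical_node_def by force+
  then have "c \<in> critical_class E c" "c' \<in> critical_class E c"
    "critical_class E c \<in> critical_classes E"
    unfolding critical_class_def critical_classes_def by auto
  then show False
    using reps assms(3-5) unfolding crit_reps_def by blast
qed

section \<open>Generating sets of row and column spaces\<close>

lemma row_eq_Max_rep_rows:
  fixes A E :: "('n::finite) tmat"
  assumes factor: "\<And>i j. \<exists>c\<in>C. E i j \<le> E i c + E c j" and fixed: "E \<otimes>\<^sub>t A = A"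
  shows "row A i = (\<lambda>j. Max ((\<lambda>c. row A c j + E i c) ` C))"
proof (rule ext, rule sym, rule Max_eqI)
  fix j
  show "finite ((\<lambda>c. row A c j + E i c) ` C)" by simp
next
  fix j y assume "y \<in> (\<lambda>c. row A c j + E i c) ` C"
  then obtain c where "y = A c j + E i c"
    unfolding row_def by auto
  then show "y \<le> row A i j"
    using tmul_ge[of E i c A j] fixed by (simp add: row_def)
next
  fix j
  obtain k where k: "A i j = E i k + A k j"
    using tmul_attained[of E A i j] fixed by auto
  obtain c where c: "c \<in> C" "E i k \<le> E i c + E c k"
    using factor by blast
  have "E c k + A k j \<le> A c j" "E i c + A c j \<le> A i j"
    using tmul_ge[of E _ _ A j] fixed by simp_all
  then have "row A i j = row A c j + E i c"
    using k c unfolding row_def by linarith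
  then show "row A i j \<in> (\<lambda>c. row A c j + E i c) ` C"
    using c(1) by blast
qed

lemma row_space_generated_by_reps:
  fixes A E :: "('n::finite) tmat"
  assumes factor: "\<And>i j. \<exists>c\<in>C. E i j \<le> E i c + E c j" and fixed: "E \<otimes>\<^sub>t A = A"
  shows "generates (row A ` C) (row_space A)"
proof -
  have "C \<noteq> {}" using factor by blast
  then have "row A i \<in> tspan (row A ` C)" for i
    by (subst row_eq_Max_rep_rows[OF factor fixed]) (rule Max_shifts_in_tspan, auto)
  then have "range (row A) \<subseteq> tspan (row A ` C)"
    by blast
  moreover have "row A ` C \<subseteq> tspan (range (row A))"
    by (auto intro: generator_in_tspan)
  ultimately show ?thesis
    unfolding generates_def row_space_def by (intro equalityI tspan_subset)
qed

lemma tmul_row_dominated: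
  assumes "\<forall>k. A c' k + d \<le> A c k"
  shows "(A \<otimes>\<^sub>t Y) c' j + d \<le> (A \<otimes>\<^sub>t (Y::('n::finite) tmat)) c j"
proof -
  obtain k where "(A \<otimes>\<^sub>t Y) c' j = A c' k + Y k j"
    using tmul_attained by blast
  moreover have "A c k + Y k j \<le> (A \<otimes>\<^sub>t Y) c j"
    by (rule tmul_ge)
  ultimately show ?thesis using assms by (smt (verit))
qed

lemma rep_row_not_in_tspan_of_others:
  fixes A E :: "('n::finite) tmat"
  assumes diag: "\<And>c. c \<in> C \<Longrightarrow> E c c = 0"
    and separated: "\<And>c c'. c \<in> C \<Longrightarrow> c' \<in> C \<Longrightarrow> c \<noteq> c' \<Longrightarrow> E c c' + E c' c < 0"
    and "E \<in> right_ideal1 A" and "c \<in> C"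
  shows "row A c \<notin> tspan (row A ` (C - {c}))"
proof
  assume "row A c \<in> tspan (row A ` (C - {c}))"
  have dominated: "\<exists>c'\<in>C - {c}. \<exists>d. (\<forall>k. A c' k + d \<le> A c k) \<and> A c' j + d = A c j" for j
  proof -
    obtain v d where v: "v \<in> row A ` (C - {c})" "\<forall>k. v k + d \<le> row A c k" "v j + d = row A c j"
      using tspan_coordinate_attained[OF \<open>row A c \<in> tspan (row A ` (C - {c}))\<close>] by blast
    then obtain c' where "c' \<in> C - {c}" "v = row A c'"
      by blast
    then show ?thesis
      using v(2,3) by (intro bexI[of _ c'] exI[of _ d]) (simp_all add: row_def)
  qed
  have "\<exists>c'\<in>C - {c}. \<exists>d. (\<forall>k. E c' k + d \<le> E c k) \<and> E c c \<le> E c' c + d"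
  proof -
    from assms(3) consider "E = A" | Y where "E = A \<otimes>\<^sub>t Y"
      unfolding right_ideal1_def by blast
    then show ?thesis
    proof cases
      case 1
      obtain c' d where "c' \<in> C - {c}" "\<forall>k. A c' k + d \<le> A c k" "A c' c + d = A c c"
        using dominated[of c] by blast
      then show ?thesis
        using 1 by (intro bexI[of _ c'] exI[of _ d]) simp_all
    next
      case (2 Y)
      obtain l where l: "E c c = A c l + Y l c"
        using tmul_attained[of A Y c c] 2 by auto
      obtain c' d where c': "c' \<in> C - {c}" "\<forall>k. A c' k + d \<le> A c k" "A c' l + d = A c l"
        using dominated[of l] by blast
      have "A c' l + Y l c \<le> E c' c"
        using tmul_ge[of A c' l Y c] 2 by simp
      then show ?thesis
        using c' l 2 tmul_row_dominated[OF c'(2)] by (intro bexI[of _ c'] exI[of _ d]) auto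
    qed
  qed
  then obtain c' d where c': "c' \<in> C" "c' \<noteq> c" "E c' c' + d \<le> E c c'" "E c c \<le> E c' c + d"
    by blast
  then have "0 \<le> E c c' + E c' c"
    using diag c'(1) assms(4) by simp
  then show False
    using separated[OF assms(4) c'(1)] c'(2) by simp
qed

lemma row_space_min_generated_by_reps:
  fixes A E :: "('n::finite) tmat"
  assumes factor: "\<And>i j. \<exists>c\<in>C. E i j \<le> E i c + E c j"
    and diag: "\<And>c. c \<in> C \<Longrightarrow> E c c = 0"
    and separated: "\<And>c c'. c \<in> C \<Longrightarrow> c' \<in> C \<Longrightarrow> c \<noteq> c' \<Longrightarrow> E c c' + E c' c < 0"
    and fixed: "E \<otimes>\<^sub>t A = A" and "E \<in> right_ideal1 A"
  shows "min_generates (row A ` C) (row_space A)"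
  unfolding min_generates_def
proof (intro conjI allI impI notI)
  show gen: "generates (row A ` C) (row_space A)"
    by (rule row_space_generated_by_reps[OF factor fixed])
  fix G' assume sub: "G' \<subset> row A ` C" and "generates G' (row_space A)"
  then obtain c where c: "c \<in> C" "row A c \<notin> G'"
    by blast
  have "G' \<subseteq> row A ` (C - {c})"
    using sub c(2) by blast
  then have "G' \<subseteq> tspan (row A ` (C - {c}))"
    using generator_in_tspan by blast
  moreover have "row A c \<in> tspan G'"
    using gen \<open>generates G' (row_space A)\<close> c(1) generator_in_tspan[of "row A c" "row A ` C"]
    unfolding generates_def by auto
  ultimately have "row A c \<in> tspan (row A ` (C - {c}))"
    using tspan_subset by blast
  then show False
    using rep_row_not_in_tspan_of_others[OF diag separated \<open>E \<in> right_ideal1 A\<close> c(1)] by blast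
qed

lemma idempotent_t_ttranspose: "idempotent_t E \<Longrightarrow> idempotent_t (ttranspose (E::('n::finite) tmat))"
  unfolding idempotent_t_def by (metis ttranspose_tmul)

lemma crit_reps_factor_ttranspose:
  fixes E :: "('n::finite) tmat"
  assumes "idempotent_t E" and "crit_reps E C"
  shows "\<exists>c\<in>C. ttranspose E i j \<le> ttranspose E i c + ttranspose E c j"
  using crit_reps_factor[OF assms, of j i] unfolding ttranspose_def by (simp add: add.commute)

lemma le_R_rep_rows_generate:
  fixes A E :: "('n::finite) tmat"
  assumes "idempotent_t E" and "crit_reps E C" and "le_R A E"
  shows "generates (row A ` C) (row_space A)"
proof -
  have "A \<in> right_ideal1 E"
    using assms(3) unfolding le_R_def right_ideal1_def by blast
  then have "E \<otimes>\<^sub>t A = A"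
    by (rule idempotent_fixes_right_ideal1[OF assms(1)])
  then show ?thesis
    by (rule row_space_generated_by_reps[OF crit_reps_factor[OF assms(1,2)]])
qed

lemma Rrel_rep_rows_min_generate:
  fixes A E :: "('n::finite) tmat"
  assumes "idempotent_t E" and "crit_reps E C" and "Rrel A E"
  shows "min_generates (row A ` C) (row_space A)"
proof -
  have "A \<in> right_ideal1 E" "E \<in> right_ideal1 A"
    using assms(3) unfolding Rrel_def right_ideal1_def by blast+
  then show ?thesis
    using row_space_min_generated_by_reps[OF crit_reps_factor[OF assms(1,2)]
        crit_reps_diag[OF assms(1,2)] crit_reps_separated[OF assms(1,2)]
        idempotent_fixes_right_ideal1[OF assms(1)]] by blast
qed

lemma le_L_rep_cols_generate:
  fixes A E :: "('n::finite) tmat"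
  assumes "idempotent_t E" and "crit_reps E C" and "le_L A E"
  shows "generates (col A ` C) (col_space A)"
proof -
  have "ttranspose A \<in> right_ideal1 (ttranspose E)"
    using assms(3) left_ideal1_iff_ttranspose unfolding le_L_def left_ideal1_def by blast
  then have "ttranspose E \<otimes>\<^sub>t ttranspose A = ttranspose A"
    by (rule idempotent_fixes_right_ideal1[OF idempotent_t_ttranspose[OF assms(1)]])
  then show ?thesis
    unfolding col_eq_row_ttranspose col_space_eq_row_space_ttranspose
    by (rule row_space_generated_by_reps[OF crit_reps_factor_ttranspose[OF assms(1,2)]])
qed

lemma Lrel_rep_cols_min_generate:
  fixes A E :: "('n::finite) tmat"
  assumes "idempotent_t E" and "crit_reps E C" and "Lrel A E"
  shows "min_generates (col A ` C) (col_space A)"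
proof -
  have "ttranspose A \<in> right_ideal1 (ttranspose E)" "ttranspose E \<in> right_ideal1 (ttranspose A)"
    using assms(3) left_ideal1_iff_ttranspose unfolding Lrel_def left_ideal1_def by blast+
  moreover have "ttranspose E c c = 0" if "c \<in> C" for c
    using crit_reps_diag[OF assms(1,2) that] by (simp add: ttranspose_def)
  moreover have "ttranspose E c c' + ttranspose E c' c < 0" if "c \<in> C" "c' \<in> C" "c \<noteq> c'" for c c'
    using crit_reps_separated[OF assms(1,2) that] by (simp add: ttranspose_def add.commute)
  ultimately show ?thesis
    unfolding col_eq_row_ttranspose col_space_eq_row_space_ttranspose
    using row_space_min_generated_by_reps[OF crit_reps_factor_ttranspose[OF assms(1,2)]]
      idempotent_fixes_right_ideal1[OF idempotent_t_ttranspose[OF assms(1)]] by blast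
qed

theorem corollary5p3:
  fixes A E :: "('n::finite) tmat" and C :: "'n set"
  assumes "idempotent_t E" and "crit_reps E C"
  shows "(le_R A E \<longrightarrow> generates (row A ` C) (row_space A))
       \<and> (Rrel A E \<longrightarrow> min_generates (row A ` C) (row_space A))
       \<and> (le_L A E \<longrightarrow> generates (col A ` C) (col_space A))
       \<and> (Lrel A E \<longrightarrow> min_generates (col A ` C) (col_space A))"
  using le_R_rep_rows_generate[OF assms] Rrel_rep_rows_min_generate[OF assms]
    le_L_rep_cols_generate[OF assms] Lrel_rep_cols_min_generate[OF assms] by blast

end
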